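(* In the imperfect-anticipation two-period setting described in the context, suppose: (i) $\{Y_{i0}(a,d),Y_{i1}(d),D_i,A_i\}_{i=1}^n$ are i.i.d. across $i$; (ii) $Y_{i0}(0,0)=Y_{i0}(0,1)=Y_{i0}(1,0)=Y_{i0}(-1,1)$ and $Y_{i0}(-1,0)=Y_{i0}(1,1)$; (iii) $\mathbb{E}[g(Y_{i1}(0))-g(Y_{i0}(0,0))\mid D_i=1]=\mathbb{E}[g(Y_{i1}(0))-g(Y_{i0}(0,0))\mid D_i=0]$; (iv) $\mathbb{P}[A_i\neq0\mid D_i=1]\le\pi$, $\mathbb{P}[A_i\neq0\mid D_i=0]\le\pi$, and $\mathbb{P}[A_i=-1\mid D_i=1,A_i\ne0]=\mathbb{P}[A_i=-1\mid D_i=0,A_i\ne0]=\varepsilon$; (v) $|\tau_g|\le|\mu_g|$. Let $m_g=\mathbb{E}[g(Y_{i1})-g(Y_{i0})\mid D_i=1]-\mathbb{E}[g(Y_{i1})-g(Y_{i0})\mid D_i=0]$, $\mu_{g,1}(\varepsilon)=\frac{m_g}{1+\operatorname{sgn}(\tau_g\mu_g)\pi\varepsilon}$ and $\mu_{g,2}(\varepsilon)=\frac{m_g}{1-\operatorname{sgn}(\tau_g\mu_g)\pi(1-\varepsilon)}$. Then \[\mu_g\in\left[\min\{\mu_{g,1}(\varepsilon),\mu_{g,2}(\varepsilon)\},\ \max\{\mu_{g,1}(\varepsilon),\mu_{g,2}(\varepsilon)\}\right].\]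
   Context: Two periods $t\in\{0,1\}$, units $i=1,\dots,n$. Each unit has an observed binary treatment $D_i\in\{0,1\}$ (in period 1) and an unobserved anticipation status $A_i\in\{-1,0,1\}$ in period 0: $A_i=0$ means no anticipation, $A_i=1$ means the unit anticipates and its anticipated treatment status equals its actual $D_i$, $A_i=-1$ means it anticipates incorrectly (anticipated status $1-D_i$). Potential outcomes: period 0, $Y_{i0}(a,d)$ for $a\in\{-1,0,1\}$, $d\in\{0,1\}$; period 1, $Y_{i1}(d)$. Observed outcomes: $Y_{i0}=Y_{i0}(A_i,D_i)$, $Y_{i1}=Y_{i1}(D_i)$. $g$ is a known measurable real function with finite expectations of $g$ of the outcomes; $\pi\in(0,1)$ and $\varepsilon\in[0,1]$ are given. Parameter of interest: $\mu_g=\mathbb{E}[g(Y_{i1}(1))-g(Y_{i1}(0))\mid D_i=1]$. The anticipatory effect $\tau_g$ is defined by $\tau_g=\mathbb{E}[g(Y_{i0}(1,1))-g(Y_{i0}(0,0))\mid D_i=1,A_i=1]=\mathbb{E}[g(Y_{i0}(-1,0))-g(Y_{i0}(0,0))\mid D_i=1,A_i=-1]$, the model requiring these two quantities to be equal. $\operatorname{sgn}$ is the sign function. *)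

theory Defs
  imports "HOL-Probability.Probability"
begin

text \<open>Anticipation status in period 0: AM1 = -1 (incorrect anticipation),
  A0 = 0 (no anticipation), A1 = 1 (correct anticipation).
  Treatment status d is encoded as bool (True = 1, False = 0).\<close>
datatype antic = AM1 | A0 | A1

definition cexp :: "'w measure \<Rightarrow> ('w \<Rightarrow> real) \<Rightarrow> ('w \<Rightarrow> bool) \<Rightarrow> real" where
  "cexp M X B = (\<integral>\<omega>. indicator {\<omega> \<in> space M. B \<omega>} \<omega> * X \<omega> \<partial>M)
                 / measure M {\<omega> \<in> space M. B \<omega>}"

definition cprob :: "'w measure \<Rightarrow> ('w \<Rightarrow> bool) \<Rightarrow> ('w \<Rightarrow> bool) \<Rightarrow> real" where
  "cprob M E B = measure M {\<omega> \<in> space M. E \<omega> \<and> B \<omega>} / measure M {\<omega> \<in> space M. B \<omega>}"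

definition unit_space ::
  "((antic \<times> bool \<Rightarrow> real) \<times> (bool \<Rightarrow> real) \<times> bool \<times> antic) measure" where
  "unit_space = (PiM UNIV (\<lambda>_. borel)) \<Otimes>\<^sub>M (PiM UNIV (\<lambda>_. borel))
                \<Otimes>\<^sub>M count_space UNIV \<Otimes>\<^sub>M count_space UNIV"

definition unit_data ::
  "(nat \<Rightarrow> antic \<Rightarrow> bool \<Rightarrow> 'w \<Rightarrow> real) \<Rightarrow> (nat \<Rightarrow> bool \<Rightarrow> 'w \<Rightarrow> real)
   \<Rightarrow> (nat \<Rightarrow> 'w \<Rightarrow> bool) \<Rightarrow> (nat \<Rightarrow> 'w \<Rightarrow> antic) \<Rightarrow> nat \<Rightarrow> 'w
   \<Rightarrow> (antic \<times> bool \<Rightarrow> real) \<times> (bool \<Rightarrow> real) \<times> bool \<times> antic" where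
  "unit_data Y0 Y1 D A j \<omega> =
     ((\<lambda>(a, d). Y0 j a d \<omega>), (\<lambda>d. Y1 j d \<omega>), D j \<omega>, A j \<omega>)"

end

theory Submission
  imports Defs
begin

text \<open>
  By (ii), the observed period-0 outcome of a treated unit equals \<open>Y\<^sub>0(0,0)\<close> unless the unit
  anticipates correctly (\<open>A = 1\<close>), and that of a control unit equals \<open>Y\<^sub>0(0,0)\<close> unless it
  anticipates incorrectly (\<open>A = -1\<close>); in both cases the deviation has mean \<open>\<tau>\<^sub>g\<close>. With
  parallel trends (iii) this gives \<open>m\<^sub>g = \<mu>\<^sub>g - \<tau>\<^sub>g k\<close> for
  \<open>k = P(A = 1 | D = 1) - P(A = -1 | D = 0) = (1 - \<epsilon>) p\<^sub>1 - \<epsilon> p\<^sub>0\<close>, where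
  \<open>p\<^sub>d = P(A \<noteq> 0 | D = d) \<in> [0, \<pi>]\<close>, so \<open>k \<in> [-\<pi>\<epsilon>, \<pi>(1 - \<epsilon>)]\<close>.
  Writing \<open>m\<^sub>g = \<mu>\<^sub>g (1 - r k)\<close> with \<open>r = \<tau>\<^sub>g / \<mu>\<^sub>g \<in> [-1, 1]\<close>, the factor \<open>1 - r k\<close> lies
  between the positive numbers \<open>1 - sgn(\<tau>\<^sub>g \<mu>\<^sub>g) \<pi> (1 - \<epsilon>)\<close> and \<open>1 + sgn(\<tau>\<^sub>g \<mu>\<^sub>g) \<pi> \<epsilon>\<close>,
  and dividing \<open>m\<^sub>g\<close> by these bounds gives the interval.

  Only the distribution of the single unit \<open>i\<close> matters.
\<close>

lemma cexp_cong:
  assumes "\<And>\<omega>. \<omega> \<in> space M \<Longrightarrow> B \<omega> \<Longrightarrow> f \<omega> = f' \<omega>"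
  shows "cexp M f B = cexp M f' B"
  unfolding cexp_def using assms
  by (intro arg_cong2[where f = "(/)"] Bochner_Integration.integral_cong)
    (auto split: split_indicator)

lemma cexp_add:
  assumes [measurable]: "B \<in> measurable M (count_space UNIV)" and "integrable M f" "integrable M f'"
  shows "cexp M (\<lambda>\<omega>. f \<omega> + f' \<omega>) B = cexp M f B + cexp M f' B"
  using assms(2,3) unfolding cexp_def distrib_left
  by (subst Bochner_Integration.integral_add)
    (auto simp: mult.commute add_divide_distrib intro: integrable_real_mult_indicator)

lemma cexp_diff:
  assumes [measurable]: "B \<in> measurable M (count_space UNIV)" and "integrable M f" "integrable M f'"
  shows "cexp M (\<lambda>\<omega>. f \<omega> - f' \<omega>) B = cexp M f B - cexp M f' B"
  using assms(2,3) unfolding cexp_def right_diff_distrib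
  by (subst Bochner_Integration.integral_diff)
    (auto simp: mult.commute diff_divide_distrib intro: integrable_real_mult_indicator)

lemma integrable_of_bool_mult:
  fixes f :: "'w \<Rightarrow> real"
  assumes [measurable]: "C \<in> measurable M (count_space UNIV)" and "integrable M f"
  shows "integrable M (\<lambda>\<omega>. of_bool (C \<omega>) * f \<omega>)"
proof -
  have "integrable M (\<lambda>\<omega>. f \<omega> * indicator {\<omega> \<in> space M. C \<omega>} \<omega>)"
    using assms(2) by (rule integrable_real_mult_indicator[rotated]) measurable
  then show ?thesis
    by (rule Bochner_Integration.integrable_cong[THEN iffD1, rotated -1]) (auto split: split_indicator)
qed

lemma cexp_of_bool_mult:
  assumes "finite_measure M"
    and [measurable]: "B \<in> measurable M (count_space UNIV)" "C \<in> measurable M (count_space UNIV)"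
  shows "cexp M (\<lambda>\<omega>. of_bool (C \<omega>) * f \<omega>) B = cprob M C B * cexp M f (\<lambda>\<omega>. B \<omega> \<and> C \<omega>)"
proof -
  interpret finite_measure M by fact
  define S where "S = {\<omega> \<in> space M. B \<omega> \<and> C \<omega>}"
  have S: "S \<in> sets M" unfolding S_def by measurable
  have "(\<integral>\<omega>. indicator {\<omega> \<in> space M. B \<omega>} \<omega> * (of_bool (C \<omega>) * f \<omega>) \<partial>M)
      = (\<integral>\<omega>. indicator S \<omega> * f \<omega> \<partial>M)"
    by (rule Bochner_Integration.integral_cong) (auto simp: S_def split: split_indicator)
  moreover have "{\<omega> \<in> space M. C \<omega> \<and> B \<omega>} = S" by (auto simp: S_def)
  moreover have "(\<integral>\<omega>. indicator S \<omega> * f \<omega> \<partial>M) = 0" if "measure M S = 0"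
  proof -
    have "AE \<omega> in M. \<omega> \<notin> S"
      using S that by (intro AE_not_in) (simp add: null_sets_def emeasure_eq_measure)
    then show ?thesis by (intro integral_eq_zero_AE) auto
  qed
  ultimately show ?thesis
    unfolding cexp_def cprob_def S_def[symmetric] by (cases "measure M S = 0") auto
qed

lemma cprob_nonneg: "0 \<le> cprob M C B"
  by (simp add: cprob_def)

lemma cprob_chain:
  assumes "finite_measure M"
    and [measurable]: "B \<in> measurable M (count_space UNIV)" "E \<in> measurable M (count_space UNIV)"
    and "\<And>\<omega>. C \<omega> \<Longrightarrow> E \<omega>"
  shows "cprob M C B = cprob M C (\<lambda>\<omega>. B \<omega> \<and> E \<omega>) * cprob M E B"
proof -
  interpret finite_measure M by fact
  have CB: "{\<omega> \<in> space M. C \<omega> \<and> B \<omega> \<and> E \<omega>} = {\<omega> \<in> space M. C \<omega> \<and> B \<omega>}"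
    and EB: "{\<omega> \<in> space M. E \<omega> \<and> B \<omega>} = {\<omega> \<in> space M. B \<omega> \<and> E \<omega>}"
    using assms(4) by auto
  have "measure M {\<omega> \<in> space M. C \<omega> \<and> B \<omega>} \<le> measure M {\<omega> \<in> space M. B \<omega> \<and> E \<omega>}"
    using assms(4) by (intro finite_measure_mono) auto
  then show ?thesis
    unfolding cprob_def CB EB
    by (cases "measure M {\<omega> \<in> space M. B \<omega> \<and> E \<omega>} = 0") (auto intro: antisym)
qed

lemma cprob_disj:
  assumes "finite_measure M"
    and [measurable]: "B \<in> measurable M (count_space UNIV)"
      "C \<in> measurable M (count_space UNIV)" "C' \<in> measurable M (count_space UNIV)"
    and "\<And>\<omega>. \<not> (C \<omega> \<and> C' \<omega>)"
  shows "cprob M (\<lambda>\<omega>. C \<omega> \<or> C' \<omega>) B = cprob M C B + cprob M C' B"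
proof -
  interpret finite_measure M by fact
  have "{\<omega> \<in> space M. (C \<omega> \<or> C' \<omega>) \<and> B \<omega>}
      = {\<omega> \<in> space M. C \<omega> \<and> B \<omega>} \<union> {\<omega> \<in> space M. C' \<omega> \<and> B \<omega>}" by auto
  moreover have "measure M ({\<omega> \<in> space M. C \<omega> \<and> B \<omega>} \<union> {\<omega> \<in> space M. C' \<omega> \<and> B \<omega>})
      = measure M {\<omega> \<in> space M. C \<omega> \<and> B \<omega>} + measure M {\<omega> \<in> space M. C' \<omega> \<and> B \<omega>}"
    using assms(5) by (intro finite_measure_Union) auto
  ultimately show ?thesis
    unfolding cprob_def by (simp add: add_divide_distrib)
qed

lemma mult_unit_interval_bounds:
  fixes lo hi k r :: real
  assumes "lo \<le> k" "k \<le> hi" "lo \<le> 0" "0 \<le> hi" "0 \<le> r" "r \<le> 1"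
  shows "lo \<le> r * k \<and> r * k \<le> hi"
proof (cases "0 \<le> k")
  case True
  then show ?thesis
    using assms mult_left_le_one_le[of k r] mult_nonneg_nonneg[of r k] by linarith
next
  case False
  then show ?thesis
    using assms mult_right_mono_neg[of r 1 k] mult_nonneg_nonpos[of r k] by linarith
qed

lemma min_max_div_bounds:
  fixes m \<mu> x a b :: real
  assumes "0 < a" "a \<le> x" "x \<le> b" "m = \<mu> * x"
  shows "min (m / b) (m / a) \<le> \<mu> \<and> \<mu> \<le> max (m / b) (m / a)"
proof -
  have "0 < x" "\<mu> = m / x" using assms by auto
  then show ?thesis
    using assms divide_left_mono[of x b m] divide_left_mono[of a x m]
      divide_left_mono_neg[of x b m] divide_left_mono_neg[of a x m]
    by (cases "0 \<le> m") (auto simp: min_def max_def)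
qed

lemma weighted_difference_bounds:
  fixes p1 p0 \<pi> \<epsilon> :: real
  assumes "0 \<le> p1" "p1 \<le> \<pi>" "0 \<le> p0" "p0 \<le> \<pi>" "0 \<le> \<epsilon>" "\<epsilon> \<le> 1"
  shows "- (\<pi> * \<epsilon>) \<le> (1 - \<epsilon>) * p1 - \<epsilon> * p0" "(1 - \<epsilon>) * p1 - \<epsilon> * p0 \<le> \<pi> * (1 - \<epsilon>)"
proof -
  have "(1 - \<epsilon>) * p1 \<le> (1 - \<epsilon>) * \<pi>" "\<epsilon> * p0 \<le> \<epsilon> * \<pi>"
    and "0 \<le> (1 - \<epsilon>) * p1" "0 \<le> \<epsilon> * p0"
    using assms by (auto intro: mult_left_mono)
  then show "- (\<pi> * \<epsilon>) \<le> (1 - \<epsilon>) * p1 - \<epsilon> * p0" "(1 - \<epsilon>) * p1 - \<epsilon> * p0 \<le> \<pi> * (1 - \<epsilon>)"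
    by (simp_all add: mult.commute)
qed

lemma attenuation_bounds:
  fixes m \<mu> \<tau> k \<pi> \<epsilon> :: real
  assumes m: "m = \<mu> - \<tau> * k" and k: "- (\<pi> * \<epsilon>) \<le> k" "k \<le> \<pi> * (1 - \<epsilon>)"
    and \<tau>: "\<bar>\<tau>\<bar> \<le> \<bar>\<mu>\<bar>" and \<pi>: "0 < \<pi>" "\<pi> < 1" and \<epsilon>: "0 \<le> \<epsilon>" "\<epsilon> \<le> 1"
  shows "min (m / (1 + sgn (\<tau> * \<mu>) * \<pi> * \<epsilon>)) (m / (1 - sgn (\<tau> * \<mu>) * \<pi> * (1 - \<epsilon>))) \<le> \<mu>
       \<and> \<mu> \<le> max (m / (1 + sgn (\<tau> * \<mu>) * \<pi> * \<epsilon>)) (m / (1 - sgn (\<tau> * \<mu>) * \<pi> * (1 - \<epsilon>)))"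
proof (cases "\<tau> = 0")
  case True
  then show ?thesis using m by simp
next
  case False
  then have "\<mu> \<noteq> 0" using \<tau> by auto
  define r where "r = \<tau> / \<mu>"
  have m_r: "m = \<mu> * (1 - r * k)" using m \<open>\<mu> \<noteq> 0\<close> by (simp add: r_def right_diff_distrib)
  have r: "\<bar>r\<bar> \<le> 1" "r \<noteq> 0" using \<tau> False \<open>\<mu> \<noteq> 0\<close> by (simp_all add: r_def)
  have sgn_r: "sgn (\<tau> * \<mu>) = sgn r" using \<open>\<mu> \<noteq> 0\<close> by (simp add: r_def sgn_mult)
  have "\<pi> * \<epsilon> \<le> \<pi>" "\<pi> * (1 - \<epsilon>) \<le> \<pi>" using \<pi> \<epsilon> by (auto intro!: mult_left_le)
  moreover have "0 \<le> \<pi> * \<epsilon>" "0 \<le> \<pi> * (1 - \<epsilon>)" using \<pi> \<epsilon> by simp_all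
  ultimately have \<pi>\<epsilon>: "0 \<le> \<pi> * \<epsilon>" "\<pi> * \<epsilon> < 1" "0 \<le> \<pi> * (1 - \<epsilon>)" "\<pi> * (1 - \<epsilon>) < 1"
    using \<pi> by linarith+
  consider "0 < r" | "r < 0" using r by linarith
  then show ?thesis
  proof cases
    case 1
    then have "- (\<pi> * \<epsilon>) \<le> r * k \<and> r * k \<le> \<pi> * (1 - \<epsilon>)"
      using k \<pi>\<epsilon> r by (intro mult_unit_interval_bounds) auto
    then have "min (m / (1 + \<pi> * \<epsilon>)) (m / (1 - \<pi> * (1 - \<epsilon>))) \<le> \<mu>
             \<and> \<mu> \<le> max (m / (1 + \<pi> * \<epsilon>)) (m / (1 - \<pi> * (1 - \<epsilon>)))"
      using \<pi>\<epsilon> m_r by (intro min_max_div_bounds[where x = "1 - r * k"]) auto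
    then show ?thesis using 1 sgn_r by simp
  next
    case 2
    then have "- (\<pi> * (1 - \<epsilon>)) \<le> (- r) * (- k) \<and> (- r) * (- k) \<le> \<pi> * \<epsilon>"
      using k \<pi>\<epsilon> r by (intro mult_unit_interval_bounds) auto
    then have "min (m / (1 + \<pi> * (1 - \<epsilon>))) (m / (1 - \<pi> * \<epsilon>)) \<le> \<mu>
             \<and> \<mu> \<le> max (m / (1 + \<pi> * (1 - \<epsilon>))) (m / (1 - \<pi> * \<epsilon>))"
      using \<pi>\<epsilon> m_r by (intro min_max_div_bounds[where x = "1 - r * k"]) auto
    then show ?thesis using 2 sgn_r by (simp add: min.commute max.commute)
  qed
qed

locale anticipation_unit = prob_space M
  for M :: "'w measure"
    and Y0 :: "antic \<Rightarrow> bool \<Rightarrow> 'w \<Rightarrow> real"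
    and Y1 :: "bool \<Rightarrow> 'w \<Rightarrow> real"
    and D :: "'w \<Rightarrow> bool"
    and A :: "'w \<Rightarrow> antic" +
  assumes measurable_D[measurable]: "D \<in> measurable M (count_space UNIV)"
    and measurable_A[measurable]: "A \<in> measurable M (count_space UNIV)"
    and integrable_Y0: "\<And>a d. integrable M (Y0 a d)"
    and integrable_Y1: "\<And>d. integrable M (Y1 d)"
    and Y0_depends_on_anticipated_treatment: "\<And>\<omega>. \<omega> \<in> space M \<Longrightarrow>
      Y0 A0 False \<omega> = Y0 A0 True \<omega> \<and> Y0 A0 False \<omega> = Y0 A1 False \<omega>
      \<and> Y0 A0 False \<omega> = Y0 AM1 True \<omega> \<and> Y0 AM1 False \<omega> = Y0 A1 True \<omega>"
begin

lemma treated_gap: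
  "cexp M (\<lambda>\<omega>. Y1 (D \<omega>) \<omega> - Y0 (A \<omega>) (D \<omega>) \<omega>) D
   = cexp M (\<lambda>\<omega>. Y1 True \<omega> - Y1 False \<omega>) D + cexp M (\<lambda>\<omega>. Y1 False \<omega> - Y0 A0 False \<omega>) D
     - cprob M (\<lambda>\<omega>. A \<omega> = A1) D
       * cexp M (\<lambda>\<omega>. Y0 A1 True \<omega> - Y0 A0 False \<omega>) (\<lambda>\<omega>. D \<omega> \<and> A \<omega> = A1)"
  (is "_ = ?rhs")
proof -
  have "Y1 (D \<omega>) \<omega> - Y0 (A \<omega>) (D \<omega>) \<omega>
      = (Y1 True \<omega> - Y1 False \<omega>) + (Y1 False \<omega> - Y0 A0 False \<omega>)
        - of_bool (A \<omega> = A1) * (Y0 A1 True \<omega> - Y0 A0 False \<omega>)" if "\<omega> \<in> space M" "D \<omega>" for \<omega>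
    using Y0_depends_on_anticipated_treatment[OF that(1)] that(2) by (cases "A \<omega>") auto
  then have "cexp M (\<lambda>\<omega>. Y1 (D \<omega>) \<omega> - Y0 (A \<omega>) (D \<omega>) \<omega>) D
      = cexp M (\<lambda>\<omega>. (Y1 True \<omega> - Y1 False \<omega>) + (Y1 False \<omega> - Y0 A0 False \<omega>)
                   - of_bool (A \<omega> = A1) * (Y0 A1 True \<omega> - Y0 A0 False \<omega>)) D"
    by (rule cexp_cong)
  also have "\<dots> = ?rhs"
    by (simp add: cexp_add cexp_diff cexp_of_bool_mult integrable_of_bool_mult
        integrable_Y0 integrable_Y1)
  finally show ?thesis .
qed

lemma control_gap:
  "cexp M (\<lambda>\<omega>. Y1 (D \<omega>) \<omega> - Y0 (A \<omega>) (D \<omega>) \<omega>) (\<lambda>\<omega>. \<not> D \<omega>)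
   = cexp M (\<lambda>\<omega>. Y1 False \<omega> - Y0 A0 False \<omega>) (\<lambda>\<omega>. \<not> D \<omega>)
     - cprob M (\<lambda>\<omega>. A \<omega> = AM1) (\<lambda>\<omega>. \<not> D \<omega>)
       * cexp M (\<lambda>\<omega>. Y0 AM1 False \<omega> - Y0 A0 False \<omega>) (\<lambda>\<omega>. \<not> D \<omega> \<and> A \<omega> = AM1)"
  (is "_ = ?rhs")
proof -
  have "Y1 (D \<omega>) \<omega> - Y0 (A \<omega>) (D \<omega>) \<omega>
      = (Y1 False \<omega> - Y0 A0 False \<omega>) - of_bool (A \<omega> = AM1) * (Y0 AM1 False \<omega> - Y0 A0 False \<omega>)"
    if "\<omega> \<in> space M" "\<not> D \<omega>" for \<omega>
    using Y0_depends_on_anticipated_treatment[OF that(1)] that(2) by (cases "A \<omega>") auto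
  then have "cexp M (\<lambda>\<omega>. Y1 (D \<omega>) \<omega> - Y0 (A \<omega>) (D \<omega>) \<omega>) (\<lambda>\<omega>. \<not> D \<omega>)
      = cexp M (\<lambda>\<omega>. (Y1 False \<omega> - Y0 A0 False \<omega>)
                   - of_bool (A \<omega> = AM1) * (Y0 AM1 False \<omega> - Y0 A0 False \<omega>)) (\<lambda>\<omega>. \<not> D \<omega>)"
    by (rule cexp_cong)
  also have "\<dots> = ?rhs"
    by (simp add: cexp_diff cexp_of_bool_mult integrable_of_bool_mult
        integrable_Y0 integrable_Y1)
  finally show ?thesis .
qed

lemma cprob_incorrect_anticipation:
  assumes [measurable]: "B \<in> measurable M (count_space UNIV)"
  shows "cprob M (\<lambda>\<omega>. A \<omega> = AM1) B
       = cprob M (\<lambda>\<omega>. A \<omega> = AM1) (\<lambda>\<omega>. B \<omega> \<and> A \<omega> \<noteq> A0) * cprob M (\<lambda>\<omega>. A \<omega> \<noteq> A0) B"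
  by (rule cprob_chain) auto

lemma cprob_correct_anticipation:
  assumes [measurable]: "B \<in> measurable M (count_space UNIV)"
  shows "cprob M (\<lambda>\<omega>. A \<omega> = A1) B
       = (1 - cprob M (\<lambda>\<omega>. A \<omega> = AM1) (\<lambda>\<omega>. B \<omega> \<and> A \<omega> \<noteq> A0)) * cprob M (\<lambda>\<omega>. A \<omega> \<noteq> A0) B"
proof -
  have "(\<lambda>\<omega>. A \<omega> \<noteq> A0) = (\<lambda>\<omega>. A \<omega> = A1 \<or> A \<omega> = AM1)"
    by (auto intro: antic.exhaust)
  then have "cprob M (\<lambda>\<omega>. A \<omega> \<noteq> A0) B = cprob M (\<lambda>\<omega>. A \<omega> = A1) B + cprob M (\<lambda>\<omega>. A \<omega> = AM1) B"
    by (simp add: cprob_disj)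
  then show ?thesis
    using cprob_incorrect_anticipation[OF assms] by (simp add: algebra_simps)
qed

end

theorem theorem3:
  fixes M :: "'w measure" and n i :: nat
    and Y0 :: "nat \<Rightarrow> antic \<Rightarrow> bool \<Rightarrow> 'w \<Rightarrow> real"
    and Y1 :: "nat \<Rightarrow> bool \<Rightarrow> 'w \<Rightarrow> real"
    and D :: "nat \<Rightarrow> 'w \<Rightarrow> bool" and A :: "nat \<Rightarrow> 'w \<Rightarrow> antic"
    and g :: "real \<Rightarrow> real" and \<pi> \<epsilon> \<tau> \<mu> m :: real
  assumes P: "prob_space M"
    and i: "i \<in> {1..n}"
    and meas_Y0: "\<And>j a d. j \<in> {1..n} \<Longrightarrow> Y0 j a d \<in> borel_measurable M"
    and meas_Y1: "\<And>j d. j \<in> {1..n} \<Longrightarrow> Y1 j d \<in> borel_measurable M"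
    and meas_D: "\<And>j. j \<in> {1..n} \<Longrightarrow> D j \<in> measurable M (count_space UNIV)"
    and meas_A: "\<And>j. j \<in> {1..n} \<Longrightarrow> A j \<in> measurable M (count_space UNIV)"
    and g_meas: "g \<in> borel_measurable borel"
    and int_Y0: "\<And>j a d. j \<in> {1..n} \<Longrightarrow> integrable M (\<lambda>\<omega>. g (Y0 j a d \<omega>))"
    and int_Y1: "\<And>j d. j \<in> {1..n} \<Longrightarrow> integrable M (\<lambda>\<omega>. g (Y1 j d \<omega>))"
    \<comment> \<open>(i) i.i.d. across units\<close>
    and indep: "prob_space.indep_vars M (\<lambda>_. unit_space) (unit_data Y0 Y1 D A) {1..n}"
    and ident: "\<And>j k. j \<in> {1..n} \<Longrightarrow> k \<in> {1..n} \<Longrightarrow>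
                  distr M unit_space (unit_data Y0 Y1 D A j) = distr M unit_space (unit_data Y0 Y1 D A k)"
    \<comment> \<open>implicit: conditioning events D=1 and D=0 have positive probability\<close>
    and D_pos: "0 < measure M {\<omega> \<in> space M. D i \<omega>}"
    and D_lt1: "measure M {\<omega> \<in> space M. D i \<omega>} < 1"
    and pi: "0 < \<pi>" "\<pi> < 1" and eps: "0 \<le> \<epsilon>" "\<epsilon> \<le> 1"
    \<comment> \<open>(ii)\<close>
    and ii: "\<And>j \<omega>. j \<in> {1..n} \<Longrightarrow> \<omega> \<in> space M \<Longrightarrow>
               Y0 j A0 False \<omega> = Y0 j A0 True \<omega> \<and> Y0 j A0 False \<omega> = Y0 j A1 False \<omega>
             \<and> Y0 j A0 False \<omega> = Y0 j AM1 True \<omega> \<and> Y0 j AM1 False \<omega> = Y0 j A1 True \<omega>"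
    \<comment> \<open>(iii) parallel trends\<close>
    and iii: "cexp M (\<lambda>\<omega>. g (Y1 i False \<omega>) - g (Y0 i A0 False \<omega>)) (D i)
            = cexp M (\<lambda>\<omega>. g (Y1 i False \<omega>) - g (Y0 i A0 False \<omega>)) (\<lambda>\<omega>. \<not> D i \<omega>)"
    \<comment> \<open>(iv)\<close>
    and iv1: "cprob M (\<lambda>\<omega>. A i \<omega> \<noteq> A0) (D i) \<le> \<pi>"
    and iv2: "cprob M (\<lambda>\<omega>. A i \<omega> \<noteq> A0) (\<lambda>\<omega>. \<not> D i \<omega>) \<le> \<pi>"
    and iv3: "cprob M (\<lambda>\<omega>. A i \<omega> = AM1) (\<lambda>\<omega>. D i \<omega> \<and> A i \<omega> \<noteq> A0) = \<epsilon>"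
    and iv4: "cprob M (\<lambda>\<omega>. A i \<omega> = AM1) (\<lambda>\<omega>. \<not> D i \<omega> \<and> A i \<omega> \<noteq> A0) = \<epsilon>"
    \<comment> \<open>anticipatory effect tau_g (the model requires the two expressions to agree)\<close>
    and tau1: "\<tau> = cexp M (\<lambda>\<omega>. g (Y0 i A1 True \<omega>) - g (Y0 i A0 False \<omega>))
                         (\<lambda>\<omega>. D i \<omega> \<and> A i \<omega> = A1)"
    and tau2: "\<tau> = cexp M (\<lambda>\<omega>. g (Y0 i AM1 False \<omega>) - g (Y0 i A0 False \<omega>))
                         (\<lambda>\<omega>. \<not> D i \<omega> \<and> A i \<omega> = AM1)"
    \<comment> \<open>parameter of interest mu_g\<close>
    and mu: "\<mu> = cexp M (\<lambda>\<omega>. g (Y1 i True \<omega>) - g (Y1 i False \<omega>)) (D i)"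
    \<comment> \<open>(v)\<close>
    and v: "\<bar>\<tau>\<bar> \<le> \<bar>\<mu>\<bar>"
    and m: "m = cexp M (\<lambda>\<omega>. g (Y1 i (D i \<omega>) \<omega>) - g (Y0 i (A i \<omega>) (D i \<omega>) \<omega>)) (D i)
              - cexp M (\<lambda>\<omega>. g (Y1 i (D i \<omega>) \<omega>) - g (Y0 i (A i \<omega>) (D i \<omega>) \<omega>)) (\<lambda>\<omega>. \<not> D i \<omega>)"
  shows "min (m / (1 + sgn (\<tau> * \<mu>) * \<pi> * \<epsilon>)) (m / (1 - sgn (\<tau> * \<mu>) * \<pi> * (1 - \<epsilon>))) \<le> \<mu>
       \<and> \<mu> \<le> max (m / (1 + sgn (\<tau> * \<mu>) * \<pi> * \<epsilon>)) (m / (1 - sgn (\<tau> * \<mu>) * \<pi> * (1 - \<epsilon>)))"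
proof -
  interpret anticipation_unit M "\<lambda>a d \<omega>. g (Y0 i a d \<omega>)" "\<lambda>d \<omega>. g (Y1 i d \<omega>)" "D i" "A i"
    by (intro anticipation_unit.intro anticipation_unit_axioms.intro
        P meas_D meas_A int_Y0 int_Y1 i) (metis ii[OF i])
  have measurable_not_D: "(\<lambda>\<omega>. \<not> D i \<omega>) \<in> measurable M (count_space UNIV)" by measurable
  define c where "c = cexp M (\<lambda>\<omega>. g (Y1 i False \<omega>) - g (Y0 i A0 False \<omega>)) (D i)"
  define p1 where "p1 = cprob M (\<lambda>\<omega>. A i \<omega> \<noteq> A0) (D i)"
  define p0 where "p0 = cprob M (\<lambda>\<omega>. A i \<omega> \<noteq> A0) (\<lambda>\<omega>. \<not> D i \<omega>)"
  have p_bounds: "0 \<le> p1" "p1 \<le> \<pi>" "0 \<le> p0" "p0 \<le> \<pi>"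
    using iv1 iv2 cprob_nonneg unfolding p1_def p0_def by auto
  have "cexp M (\<lambda>\<omega>. g (Y1 i (D i \<omega>) \<omega>) - g (Y0 i (A i \<omega>) (D i \<omega>) \<omega>)) (D i)
      = \<mu> + c - \<tau> * ((1 - \<epsilon>) * p1)"
    unfolding treated_gap cprob_correct_anticipation[OF measurable_D] iv3
      p1_def[symmetric] c_def[symmetric] mu[symmetric] tau1[symmetric] by simp
  moreover have "cexp M (\<lambda>\<omega>. g (Y1 i (D i \<omega>) \<omega>) - g (Y0 i (A i \<omega>) (D i \<omega>) \<omega>)) (\<lambda>\<omega>. \<not> D i \<omega>)
      = c - \<tau> * (\<epsilon> * p0)"
    unfolding control_gap cprob_incorrect_anticipation[OF measurable_not_D] iv4
      p0_def[symmetric] c_def iii[symmetric] tau2[symmetric] by simp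
  ultimately have "m = \<mu> - \<tau> * ((1 - \<epsilon>) * p1 - \<epsilon> * p0)"
    unfolding m by (simp add: algebra_simps)
  then show ?thesis
    using weighted_difference_bounds[OF p_bounds eps] by (rule attenuation_bounds[OF _ _ _ v pi eps])
qed

end
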